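(* Let $\alpha>0$ and let $a:\mathbb{R}\to[\alpha,\infty)$ and $f:\mathbb{R}\to\mathbb{R}$ be slowly oscillating. Then the function $F(t):=\int_{-\infty}^te^{-\int_s^ta(r)\,dr}f(s)\,ds$, $t\in\mathbb{R}$, is slowly oscillating.
   Context: In this statement a function $g:\mathbb{R}\to\mathbb{R}$ is called slowly oscillating if it is bounded and continuous (hence uniformly continuous) and for every $\omega\in\mathbb{R}$, $\lim_{|t|\to+\infty}|g(t+\omega)-g(t)|=0$. *)

theory Defs
  imports "HOL-Analysis.Analysis"
begin

definition slowly_oscillating :: "(real \<Rightarrow> real) \<Rightarrow> bool" where
  "slowly_oscillating g \<longleftrightarrow>
     bounded (range g) \<and> continuous_on UNIV g \<and>
     (\<forall>\<omega>::real. ((\<lambda>t. \<bar>g (t + \<omega>) - g t\<bar>) \<longlongrightarrow> 0) at_infinity)"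

end

theory Submission
  imports Defs "HOL-Real_Asymp.Real_Asymp"
begin

text \<open>Because \<open>a \<ge> \<alpha> > 0\<close>, the weight \<open>exp (- integral {s..t} a)\<close> is at most
  \<open>exp (-\<alpha> (t - s))\<close>.  Hence \<open>F\<close> is bounded by \<open>sup \<bar>f\<bar> / \<alpha>\<close>, and the contribution of
  \<open>s \<le> t - L\<close> to \<open>F t\<close> is at most \<open>sup \<bar>f\<bar> exp (-\<alpha> L) / \<alpha>\<close>, uniformly in \<open>t\<close>.  So
  \<open>\<bar>F (t + \<omega>) - F t\<bar>\<close> is small as soon as \<open>L\<close> is large and \<open>a\<close>, \<open>f\<close> move little under
  the shift by \<open>\<omega>\<close> on the window \<open>[t - L, t]\<close>: for \<open>\<bar>t\<bar> \<rightarrow> \<infinity>\<close> by slow oscillation, and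
  for \<open>\<omega> \<rightarrow> 0\<close> (continuity of \<open>F\<close>) by uniform continuity of \<open>a\<close> and \<open>f\<close> on compacts.\<close>

lemma has_integral_exp_Iic:
  fixes \<alpha> c :: real
  assumes "\<alpha> > 0"
  shows "((\<lambda>s. exp (\<alpha> * s)) has_integral exp (\<alpha> * c) / \<alpha>) {..c}"
proof -
  let ?g = "\<lambda>x::real. exp (- \<alpha> * x)"
  have g: "(?g has_integral exp (\<alpha> * c) / \<alpha>) {-c..}"
    using has_integral_exp_minus_to_infinity[OF assms, of "-c"] by simp
  have "?g absolutely_integrable_on {-c..}"
    by (rule nonnegative_absolutely_integrable_1) (use g in auto)
  moreover have "(\<lambda>x. ?g (-x)) absolutely_integrable_on {..c} \<and>
      integral {..c} (\<lambda>x. ?g (-x)) = exp (\<alpha> * c) / \<alpha> \<longleftrightarrow>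
      ?g absolutely_integrable_on {-c..} \<and> integral {-c..} ?g = exp (\<alpha> * c) / \<alpha>"
    by (rule has_absolute_integral_reflect_real) auto
  ultimately have "(\<lambda>s. exp (\<alpha> * s)) absolutely_integrable_on {..c} \<and>
      integral {..c} (\<lambda>s. exp (\<alpha> * s)) = exp (\<alpha> * c) / \<alpha>"
    using g by (simp add: integral_unique)
  then show ?thesis
    using absolutely_integrable_on_def has_integral_integrable_integral by blast
qed

lemma continuous_on_Iic_from_Icc:
  fixes g :: "real \<Rightarrow> 'b::topological_space"
  assumes "\<And>c. c < t \<Longrightarrow> continuous_on {c..t} g"
  shows "continuous_on {..t} g"
  unfolding continuous_on_eq_continuous_within
proof
  fix x assume x: "x \<in> {..t}"
  have "continuous (at x within {x-1..t}) g"
    using assms[of "x-1"] x by (simp add: continuous_on_eq_continuous_within)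
  moreover have "at x within {..t} = at x within {x-1..t}"
    by (rule at_within_nhd[where S="{x-1<..}"]) auto
  ultimately show "continuous (at x within {..t}) g" by simp
qed

lemma abs_exp_minus_diff_le:
  fixes x y :: real
  assumes "x \<ge> 0" "y \<ge> 0"
  shows "\<bar>exp (-x) - exp (-y)\<bar> \<le> \<bar>x - y\<bar>"
proof -
  have *: "exp (-u) - exp (-v) \<le> v - u" if "0 \<le> u" "u \<le> v" for u v :: real
  proof -
    have "exp (-u) - exp (-v) = exp (-u) * (1 - exp (u - v))"
      by (simp add: algebra_simps flip: exp_add)
    also have "\<dots> \<le> 1 - exp (u - v)"
      using that by (intro mult_left_le_one_le) auto
    also have "\<dots> \<le> v - u"
      using exp_ge_add_one_self[of "u - v"] by argo
    finally show ?thesis .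
  qed
  show ?thesis
    using *[of x y] *[of y x] assms by (cases "x \<le> y") auto
qed

locale damped_integral =
  fixes \<alpha> M :: real and a f :: "real \<Rightarrow> real"
  assumes alpha_pos: "\<alpha> > 0" and a_ge: "\<And>t. a t \<ge> \<alpha>"
    and a_continuous: "continuous_on UNIV a" and f_continuous: "continuous_on UNIV f"
    and f_bound: "\<And>t. \<bar>f t\<bar> \<le> M"
begin

definition A :: "real \<Rightarrow> real \<Rightarrow> real" where
  "A s t = integral {s..t} a"

definition K :: "real \<Rightarrow> real \<Rightarrow> real" where
  "K t s = exp (- A s t) * f s"

definition F :: "real \<Rightarrow> real" where
  "F t = integral {..t} (K t)"

definition shift_close :: "real \<Rightarrow> real \<Rightarrow> real \<Rightarrow> real \<Rightarrow> bool" where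
  "shift_close d L t \<omega> \<longleftrightarrow>
     (\<forall>x\<in>{t-L..t}. \<bar>a (x + \<omega>) - a x\<bar> \<le> d \<and> \<bar>f (x + \<omega>) - f x\<bar> \<le> d)"

lemma M_nonneg: "M \<ge> 0"
  using f_bound[of 0] by linarith

lemma a_integrable: "a integrable_on {s..t}"
  by (rule integrable_continuous_real) (rule continuous_on_subset[OF a_continuous], auto)

lemma A_lower_bound: "s \<le> t \<Longrightarrow> \<alpha> * (t - s) \<le> A s t"
proof -
  assume "s \<le> t"
  moreover have "integral {s..t} (\<lambda>_. \<alpha>) \<le> integral {s..t} a"
    by (rule integral_le) (auto simp: a_integrable a_ge)
  ultimately show ?thesis
    by (simp add: A_def mult.commute)
qed

lemma A_nonneg: "s \<le> t \<Longrightarrow> 0 \<le> A s t"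
  using A_lower_bound[of s t] alpha_pos by (smt (verit) mult_nonneg_nonneg)

lemma A_shift_diff_le:
  assumes "s \<in> {t-L..t}" and close: "\<And>x. x \<in> {s..t} \<Longrightarrow> \<bar>a (x + \<omega>) - a x\<bar> \<le> d"
  shows "\<bar>A (s + \<omega>) (t + \<omega>) - A s t\<bar> \<le> L * d"
proof -
  have shifted: "(\<lambda>r. a (r + \<omega>)) integrable_on {s..t}"
    using integrable_shift_real_ivl[OF a_integrable[of "s+\<omega>" "t+\<omega>"], of \<omega>] by simp
  have "A (s + \<omega>) (t + \<omega>) - A s t = integral {s..t} (\<lambda>r. a (r + \<omega>) - a r)"
    using integral_shift_real_ivl[of "s+\<omega>" \<omega> "t+\<omega>" a] shifted a_integrable
    by (simp add: A_def integral_diff)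
  also have "norm \<dots> \<le> integral {s..t} (\<lambda>_. d)"
    by (rule integral_norm_bound_integral) (use shifted a_integrable close in \<open>auto intro!: integrable_diff\<close>)
  also have "\<dots> \<le> L * d"
  proof -
    have "d \<ge> 0"
      using assms(1) close[of t] by fastforce
    with assms(1) show ?thesis
      by (auto intro: mult_right_mono)
  qed
  finally show ?thesis by simp
qed

lemma K_continuous_on: "continuous_on {..t} (K t)"
proof -
  have "continuous_on {..t} (\<lambda>s. A s t)"
    unfolding A_def
    by (rule continuous_on_Iic_from_Icc) (rule indefinite_integral_continuous_1'[OF a_integrable])
  then show ?thesis
    unfolding K_def by (intro continuous_intros continuous_on_subset[OF f_continuous]) auto
qed

lemma K_bound: "s \<le> t \<Longrightarrow> \<bar>K t s\<bar> \<le> M * exp (-\<alpha> * t) * exp (\<alpha> * s)"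
proof -
  assume st: "s \<le> t"
  have "\<bar>K t s\<bar> = exp (- A s t) * \<bar>f s\<bar>"
    by (simp add: K_def abs_mult)
  also have "\<dots> \<le> exp (- (\<alpha> * (t - s))) * M"
    using A_lower_bound[OF st] f_bound[of s] by (intro mult_mono) auto
  also have "\<dots> = M * exp (-\<alpha> * t) * exp (\<alpha> * s)"
    by (simp add: algebra_simps flip: exp_add)
  finally show ?thesis .
qed

lemma majorant_has_integral:
  "((\<lambda>s. M * exp (-\<alpha> * t) * exp (\<alpha> * s)) has_integral M * exp (-\<alpha> * t) * (exp (\<alpha> * c) / \<alpha>)) {..c}"
  by (rule has_integral_mult_right) (rule has_integral_exp_Iic[OF alpha_pos])

lemma K_integrable_Iic:
  assumes "c \<le> t"
  shows "K t integrable_on {..c}"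
proof (rule measurable_bounded_by_integrable_imp_integrable)
  show "K t \<in> borel_measurable (lebesgue_on {..c})"
    using assms by (intro continuous_imp_measurable_on_sets_lebesgue continuous_on_subset[OF K_continuous_on]) auto
  show "norm (K t s) \<le> M * exp (-\<alpha> * t) * exp (\<alpha> * s)" if "s \<in> {..c}" for s
    using K_bound[of s t] that assms by simp
qed (use majorant_has_integral in auto)

lemma K_integrable_Icc: "K t integrable_on {c..t}"
  by (rule integrable_continuous_real) (rule continuous_on_subset[OF K_continuous_on], auto)

lemma F_split: "c \<le> t \<Longrightarrow> F t = integral {..c} (K t) + integral {c..t} (K t)"
proof -
  assume ct: "c \<le> t"
  have "(K t has_integral integral {..c} (K t) + integral {c..t} (K t)) ({..c} \<union> {c..t})"
    by (rule has_integral_Un)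
       (use K_integrable_Iic[OF ct] K_integrable_Icc ct in \<open>auto simp: min_def\<close>)
  moreover have "{..c} \<union> {c..t} = {..t}"
    using ct by auto
  ultimately show ?thesis
    unfolding F_def by (simp add: integral_unique)
qed

lemma integral_Iic_K_bound:
  assumes "c \<le> t"
  shows "\<bar>integral {..c} (K t)\<bar> \<le> M * exp (-\<alpha> * (t - c)) / \<alpha>"
proof -
  have "norm (integral {..c} (K t)) \<le> integral {..c} (\<lambda>s. M * exp (-\<alpha> * t) * exp (\<alpha> * s))"
    by (rule integral_norm_bound_integral)
       (use K_integrable_Iic has_integral_integrable[OF majorant_has_integral] K_bound assms in auto)
  also have "\<dots> = M * exp (-\<alpha> * t) * (exp (\<alpha> * c) / \<alpha>)"
    using majorant_has_integral by (rule integral_unique)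
  also have "\<dots> = M * exp (-\<alpha> * (t - c)) / \<alpha>"
    by (simp add: algebra_simps flip: exp_add)
  finally show ?thesis by simp
qed

lemma F_bound: "\<bar>F t\<bar> \<le> M / \<alpha>"
  using integral_Iic_K_bound[of t t] by (simp add: F_def)

lemma K_shift_diff_le:
  assumes "L \<ge> 0" "d \<ge> 0" "shift_close d L t \<omega>" "s \<in> {t-L..t}"
  shows "\<bar>K (t + \<omega>) (s + \<omega>) - K t s\<bar> \<le> (1 + M * L) * d"
proof -
  define A\<^sub>\<omega> A\<^sub>0 where "A\<^sub>\<omega> = A (s + \<omega>) (t + \<omega>)" and "A\<^sub>0 = A s t"
  have nonneg: "A\<^sub>\<omega> \<ge> 0" "A\<^sub>0 \<ge> 0"
    using A_nonneg assms(4) by (auto simp: A\<^sub>\<omega>_def A\<^sub>0_def)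
  have close: "\<bar>a (x + \<omega>) - a x\<bar> \<le> d" "\<bar>f (x + \<omega>) - f x\<bar> \<le> d" if "x \<in> {t-L..t}" for x
    using assms(3) that by (auto simp: shift_close_def)
  have "\<bar>A\<^sub>\<omega> - A\<^sub>0\<bar> \<le> L * d"
    unfolding A\<^sub>\<omega>_def A\<^sub>0_def by (rule A_shift_diff_le) (use assms(4) close in auto)
  then have exp_diff: "\<bar>exp (-A\<^sub>\<omega>) - exp (-A\<^sub>0)\<bar> \<le> L * d"
    using abs_exp_minus_diff_le[OF nonneg] by linarith
  have "K (t + \<omega>) (s + \<omega>) - K t s = exp (-A\<^sub>\<omega>) * (f (s + \<omega>) - f s) + (exp (-A\<^sub>\<omega>) - exp (-A\<^sub>0)) * f s"
    by (simp add: K_def A\<^sub>\<omega>_def A\<^sub>0_def algebra_simps)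
  also have "\<bar>\<dots>\<bar> \<le> exp (-A\<^sub>\<omega>) * \<bar>f (s + \<omega>) - f s\<bar> + \<bar>exp (-A\<^sub>\<omega>) - exp (-A\<^sub>0)\<bar> * \<bar>f s\<bar>"
    by (simp add: abs_mult abs_triangle_ineq[THEN order_trans])
  also have "\<dots> \<le> 1 * d + (L * d) * M"
    using nonneg close assms(1,2,4) exp_diff f_bound[of s]
    by (intro add_mono mult_mono) auto
  finally show ?thesis by (simp add: algebra_simps)
qed

lemma F_shift_diff_le:
  assumes L: "L > 0" and "d \<ge> 0" and close: "shift_close d L t \<omega>"
  shows "\<bar>F (t + \<omega>) - F t\<bar> \<le> L * (1 + M * L) * d + 2 * M * exp (-\<alpha> * L) / \<alpha>"
proof -
  let ?W\<^sub>\<omega> = "integral {t-L..t} (\<lambda>s. K (t + \<omega>) (s + \<omega>))" and ?W\<^sub>0 = "integral {t-L..t} (K t)"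
  have split_shifted: "F (t + \<omega>) = integral {..t+\<omega>-L} (K (t + \<omega>)) + ?W\<^sub>\<omega>"
    using F_split[of "t+\<omega>-L" "t+\<omega>"] integral_shift_real_ivl[of "t+\<omega>-L" \<omega> "t+\<omega>" "K (t + \<omega>)"] L
    by simp
  have split: "F t = integral {..t-L} (K t) + ?W\<^sub>0"
    using F_split[of "t-L" t] L by simp
  have tails: "\<bar>integral {..t+\<omega>-L} (K (t + \<omega>))\<bar> \<le> M * exp (-\<alpha> * L) / \<alpha>"
              "\<bar>integral {..t-L} (K t)\<bar> \<le> M * exp (-\<alpha> * L) / \<alpha>"
    using integral_Iic_K_bound[of "t+\<omega>-L" "t+\<omega>"] integral_Iic_K_bound[of "t-L" t] L by simp_all
  have int_shifted: "(\<lambda>s. K (t + \<omega>) (s + \<omega>)) integrable_on {t-L..t}"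
    using integrable_shift_real_ivl[OF K_integrable_Icc[of "t+\<omega>" "t+\<omega>-L"], of \<omega>] by simp
  have "\<bar>?W\<^sub>\<omega> - ?W\<^sub>0\<bar> = norm (integral {t-L..t} (\<lambda>s. K (t + \<omega>) (s + \<omega>) - K t s))"
    using int_shifted K_integrable_Icc by (simp add: integral_diff)
  also have "\<dots> \<le> integral {t-L..t} (\<lambda>_. (1 + M * L) * d)"
    by (rule integral_norm_bound_integral)
       (use int_shifted K_integrable_Icc K_shift_diff_le[OF _ assms(2,3)] L in \<open>auto intro!: integrable_diff\<close>)
  also have "\<dots> = L * (1 + M * L) * d"
    using L by simp
  finally show ?thesis
    using split_shifted split tails by linarith
qed

lemma F_shift_diff_less:
  assumes "\<epsilon> > 0"
  obtains L d where "L > 0" "d > 0" "\<And>t \<omega>. shift_close d L t \<omega> \<Longrightarrow> \<bar>F (t + \<omega>) - F t\<bar> < \<epsilon>"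
proof -
  have "((\<lambda>L. 2 * M * exp (-\<alpha> * L) / \<alpha>) \<longlongrightarrow> 0) at_top"
    using alpha_pos by real_asymp
  then have "eventually (\<lambda>L. L > 0 \<and> 2 * M * exp (-\<alpha> * L) / \<alpha> < \<epsilon> / 2) at_top"
    using assms by (intro eventually_conj eventually_gt_at_top order_tendstoD(2)) auto
  then obtain L where L: "L > 0" and tail: "2 * M * exp (-\<alpha> * L) / \<alpha> < \<epsilon> / 2"
    using eventually_happens by force
  define d where "d = \<epsilon> / (4 * (L * (1 + M * L)))"
  have window: "L * (1 + M * L) > 0"
    using L M_nonneg by (simp add: add_pos_nonneg)
  then have d: "d > 0" and window_term: "L * (1 + M * L) * d = \<epsilon> / 4"
    using assms by (simp_all add: d_def field_simps)
  show thesis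
  proof (rule that[OF L d])
    fix t \<omega>
    assume "shift_close d L t \<omega>"
    then have "\<bar>F (t + \<omega>) - F t\<bar> \<le> L * (1 + M * L) * d + 2 * M * exp (-\<alpha> * L) / \<alpha>"
      using F_shift_diff_le[OF L] d by simp
    then show "\<bar>F (t + \<omega>) - F t\<bar> < \<epsilon>"
      using window_term tail assms by linarith
  qed
qed

lemma F_continuous: "continuous_on UNIV F"
  unfolding continuous_on_iff
proof (intro ballI allI impI)
  fix t\<^sub>0 \<epsilon> :: real
  assume "\<epsilon> > 0"
  then obtain L d where "L > 0" "d > 0"
    and small: "\<And>t \<omega>. shift_close d L t \<omega> \<Longrightarrow> \<bar>F (t + \<omega>) - F t\<bar> < \<epsilon>"
    using F_shift_diff_less by metis
  define C where "C = {t\<^sub>0-L-1..t\<^sub>0+1}"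
  have "uniformly_continuous_on C a" "uniformly_continuous_on C f"
    by (auto simp: C_def intro!: compact_uniformly_continuous
        continuous_on_subset[OF a_continuous] continuous_on_subset[OF f_continuous])
  then obtain \<delta>\<^sub>a \<delta>\<^sub>f where "\<delta>\<^sub>a > 0" "\<delta>\<^sub>f > 0"
    and uc_a: "\<And>x x'. x \<in> C \<Longrightarrow> x' \<in> C \<Longrightarrow> dist x' x < \<delta>\<^sub>a \<Longrightarrow> dist (a x') (a x) < d"
    and uc_f: "\<And>x x'. x \<in> C \<Longrightarrow> x' \<in> C \<Longrightarrow> dist x' x < \<delta>\<^sub>f \<Longrightarrow> dist (f x') (f x) < d"
    using \<open>d > 0\<close> unfolding uniformly_continuous_on_def by metis
  show "\<exists>\<delta>>0. \<forall>t\<in>UNIV. dist t t\<^sub>0 < \<delta> \<longrightarrow> dist (F t) (F t\<^sub>0) < \<epsilon>"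
  proof (intro exI conjI ballI impI)
    show "min 1 (min \<delta>\<^sub>a \<delta>\<^sub>f) > 0"
      using \<open>\<delta>\<^sub>a > 0\<close> \<open>\<delta>\<^sub>f > 0\<close> by simp
    fix t :: real
    assume "dist t t\<^sub>0 < min 1 (min \<delta>\<^sub>a \<delta>\<^sub>f)"
    then have "shift_close d L t\<^sub>0 (t - t\<^sub>0)"
      using uc_a uc_f unfolding shift_close_def C_def dist_real_def
      by (smt (verit, ccfv_threshold) atLeastAtMost_iff)
    then show "dist (F t) (F t\<^sub>0) < \<epsilon>"
      using small[of t\<^sub>0 "t - t\<^sub>0"] by (simp add: dist_real_def)
  qed
qed

lemma F_shift_tendsto_zero:
  assumes a_osc: "((\<lambda>t. \<bar>a (t + \<omega>) - a t\<bar>) \<longlongrightarrow> 0) at_infinity"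
    and f_osc: "((\<lambda>t. \<bar>f (t + \<omega>) - f t\<bar>) \<longlongrightarrow> 0) at_infinity"
  shows "((\<lambda>t. \<bar>F (t + \<omega>) - F t\<bar>) \<longlongrightarrow> 0) at_infinity"
  unfolding tendsto_iff
proof (intro allI impI)
  fix \<epsilon> :: real
  assume "\<epsilon> > 0"
  then obtain L d where "L > 0" "d > 0"
    and small: "\<And>t \<omega>. shift_close d L t \<omega> \<Longrightarrow> \<bar>F (t + \<omega>) - F t\<bar> < \<epsilon>"
    using F_shift_diff_less by metis
  have "eventually (\<lambda>t. \<bar>a (t + \<omega>) - a t\<bar> < d \<and> \<bar>f (t + \<omega>) - f t\<bar> < d) at_infinity"
    using a_osc f_osc \<open>d > 0\<close> unfolding tendsto_iff by (auto intro: eventually_conj)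
  then obtain b where b: "\<And>x::real. b \<le> norm x \<Longrightarrow> \<bar>a (x + \<omega>) - a x\<bar> < d \<and> \<bar>f (x + \<omega>) - f x\<bar> < d"
    unfolding eventually_at_infinity by blast
  have "shift_close d L t \<omega>" if "b + L \<le> norm t" for t :: real
    unfolding shift_close_def
  proof
    fix x
    assume "x \<in> {t-L..t}"
    with that have "b \<le> norm x"
      by auto
    then show "\<bar>a (x + \<omega>) - a x\<bar> \<le> d \<and> \<bar>f (x + \<omega>) - f x\<bar> \<le> d"
      using b by force
  qed
  then show "eventually (\<lambda>t. dist \<bar>F (t + \<omega>) - F t\<bar> 0 < \<epsilon>) at_infinity"
    unfolding eventually_at_infinity using small by auto
qed

end

theorem lemma4p2:
  fixes \<alpha> :: real and a f :: "real \<Rightarrow> real"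
  assumes "\<alpha> > 0"
    and "\<And>t. a t \<ge> \<alpha>"
    and "slowly_oscillating a"
    and "slowly_oscillating f"
  shows "slowly_oscillating
           (\<lambda>t. integral {..t} (\<lambda>s. exp (- integral {s..t} a) * f s))"
proof -
  from assms(4) obtain M where "\<And>x. norm (f x) \<le> M"
    unfolding slowly_oscillating_def bounded_iff by blast
  then interpret damped_integral \<alpha> M a f
    using assms unfolding slowly_oscillating_def by unfold_locales auto
  have "(\<lambda>t. integral {..t} (\<lambda>s. exp (- integral {s..t} a) * f s)) = F"
    by (simp add: fun_eq_iff F_def K_def[abs_def] A_def)
  moreover have "slowly_oscillating F"
    unfolding slowly_oscillating_def
  proof (intro conjI allI)
    show "bounded (range F)"
      unfolding bounded_iff using F_bound by auto
    show "continuous_on UNIV F"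
      by (rule F_continuous)
    show "((\<lambda>t. \<bar>F (t + \<omega>) - F t\<bar>) \<longlongrightarrow> 0) at_infinity" for \<omega>
      by (rule F_shift_tendsto_zero) (use assms(3,4) in \<open>auto simp: slowly_oscillating_def\<close>)
  qed
  ultimately show ?thesis
    by simp
qed

end
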